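(* Let $\mathcal L_n\subset\mathbb C[z_1,z_2,\theta_1,\theta_2]$ be the left ideal generated by $L_1$ and $L_2$. Then its restriction $\mathcal L_n|_{z_2=0}$ is the left ideal of $\mathbb C[z_1,\theta_1]$ generated by $$L:=\theta_1^2-a_0z_1(\theta_1+a_1)(\theta_1+a_2).$$
   Context: $\mathbb C[z_1,z_2,\theta_1,\theta_2]$ denotes the non-commutative ring with relations $\theta_iz_i=z_i(\theta_i+1)$ ($i=1,2$), all other pairs of generators commuting; $\theta_i$ is interpreted as $z_i\partial/\partial z_i$. For a left ideal $\mathcal I$ of this ring, its restriction to $z_2=0$ is $\mathcal I|_{z_2=0}=\{A\in\mathbb C[z_1,\theta_1]:\ \exists B_1,B_2\in\mathbb C[z_1,z_2,\theta_1,\theta_2],\ A+z_2B_1+\theta_2B_2\in\mathcal I\}$. Fix an integer $n\ge1$ and constants $a_0\neq0,a_1,a_2$, and $L_1=-n\theta_1\theta_2+\theta_1^2-a_0z_1(\theta_1+a_1)(\theta_1+a_2)$, $L_2=\theta_2^{n}-(-1)^n z_2\,(n\theta_2-\theta_1)(n\theta_2-\theta_1+1)\cdots(n\theta_2-\theta_1+n-1)$. *)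

theory Defs
  imports "HOL-Computational_Algebra.Polynomial"
begin

text \<open>
  The ring C[z1,z2,theta1,theta2] with theta_i z_i = z_i (theta_i + 1).
  Every element has a unique normal form  sum_{(i,j)} z1^i z2^j P_{i,j}(theta1,theta2)
  (z's on the left).  An element is represented by the coefficient function
  (i,j) |-> P_{i,j}, where P_{i,j} :: complex poly poly is a polynomial in theta2 whose
  coefficients are polynomials in theta1.
\<close>

type_synonym wop = "nat \<times> nat \<Rightarrow> complex poly poly"

definition wfin :: "wop \<Rightarrow> bool" where
  "wfin f \<longleftrightarrow> finite {k. f k \<noteq> 0}"

text \<open>P(theta1,theta2) * z1^b1 z2^b2 = z1^b1 z2^b2 P(theta1+b1, theta2+b2)\<close>
definition wshift :: "nat \<Rightarrow> nat \<Rightarrow> complex poly poly \<Rightarrow> complex poly poly" where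
  "wshift b1 b2 P = pcompose (map_poly (\<lambda>p. pcompose p [:of_nat b1, 1:]) P) [:[:of_nat b2:], 1:]"

definition wmul :: "wop \<Rightarrow> wop \<Rightarrow> wop" where
  "wmul f g = (\<lambda>(i,j). \<Sum>a\<le>i. \<Sum>b\<le>j. wshift (i - a) (j - b) (f (a,b)) * g (i - a, j - b))"

definition wadd :: "wop \<Rightarrow> wop \<Rightarrow> wop" where
  "wadd f g = (\<lambda>k. f k + g k)"

definition wsmul :: "complex \<Rightarrow> wop \<Rightarrow> wop" where
  "wsmul c f = (\<lambda>k. [:[:c:]:] * f k)"

definition wconst :: "complex poly poly \<Rightarrow> wop" where
  "wconst P = (\<lambda>k. if k = (0,0) then P else 0)"

definition wone :: wop where "wone = wconst 1"
definition wc :: "complex \<Rightarrow> wop" where "wc c = wconst [:[:c:]:]"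
definition wz1 :: wop where "wz1 = (\<lambda>k. if k = (1,0) then 1 else 0)"
definition wz2 :: wop where "wz2 = (\<lambda>k. if k = (0,1) then 1 else 0)"
definition wth1 :: wop where "wth1 = wconst [:[:0, 1:]:]"
definition wth2 :: wop where "wth2 = wconst [:0, 1:]"

definition wpow :: "wop \<Rightarrow> nat \<Rightarrow> wop" where
  "wpow f m = (wmul f ^^ m) wone"

definition left_ideal_gen :: "wop list \<Rightarrow> wop set" where
  "left_ideal_gen gs = {foldr wadd (map2 wmul ps gs) (\<lambda>_. 0) | ps.
       length ps = length gs \<and> (\<forall>p\<in>set ps. wfin p)}"

text \<open>The subring C[z1,theta1]: no z2, no theta2.\<close>
definition in_sub1 :: "wop \<Rightarrow> bool" where
  "in_sub1 f \<longleftrightarrow> wfin f \<and> (\<forall>i j. j \<noteq> 0 \<longrightarrow> f (i,j) = 0) \<and> (\<forall>i. degree (f (i,0)) = 0)"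

definition restrict_z2 :: "wop set \<Rightarrow> wop set" where
  "restrict_z2 I = {A. in_sub1 A \<and> (\<exists>B1 B2. wfin B1 \<and> wfin B2 \<and>
       wadd A (wadd (wmul wz2 B1) (wmul wth2 B2)) \<in> I)}"

definition sub1_left_ideal :: "wop \<Rightarrow> wop set" where
  "sub1_left_ideal g = {wmul Q g | Q. in_sub1 Q}"

definition opL1 :: "nat \<Rightarrow> complex \<Rightarrow> complex \<Rightarrow> complex \<Rightarrow> wop" where
  "opL1 n a0 a1 a2 =
     wadd (wadd (wsmul (- of_nat n) (wmul wth1 wth2)) (wmul wth1 wth1))
          (wsmul (- a0) (wmul wz1 (wmul (wadd wth1 (wc a1)) (wadd wth1 (wc a2)))))"

definition opL2 :: "nat \<Rightarrow> wop" where
  "opL2 n =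
     wadd (wpow wth2 n)
          (wsmul (- ((-1) ^ n)) (wmul wz2
             (foldr wmul
               (map (\<lambda>k. wadd (wadd (wsmul (of_nat n) wth2) (wsmul (-1) wth1)) (wc (of_nat k))) [0..<n])
               wone)))"

definition opL :: "complex \<Rightarrow> complex \<Rightarrow> complex \<Rightarrow> wop" where
  "opL a0 a1 a2 = wadd (wmul wth1 wth1)
          (wsmul (- a0) (wmul wz1 (wmul (wadd wth1 (wc a1)) (wadd wth1 (wc a2)))))"

end

theory Submission imports Defs begin

text \<open>
  Setting z2 = 0 and theta2 = 0, i.e. keeping only the z2-free, theta2-constant part of the
  normal form, is a ring homomorphism onto C[z1,theta1]: the span of the monomials containing
  z2 or theta2 is a two-sided ideal, because theta2 z2 = z2 (theta2 + 1).  It fixes C[z1,theta1],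
  sends L1 to L and L2 to 0 (as n \<ge> 1), and kills z2 B1 + theta2 B2; hence every element of the
  restriction is a left multiple of L.  Conversely, for Q in C[z1,theta1] the operator theta2
  commutes with Q, so Q L1 = Q L + theta2 (-n Q theta1) exhibits Q L in the restriction.
\<close>

definition wzero :: wop where "wzero = (\<lambda>_. 0)"

definition wreduce :: "wop \<Rightarrow> wop" where
  "wreduce f = (\<lambda>(i,j). if j = 0 then [:coeff (f (i,0)) 0:] else 0)"

lemma wreduce_apply: "wreduce f (i,j) = (if j = 0 then [:coeff (f (i,0)) 0:] else 0)"
  by (simp add: wreduce_def)

lemma wmul_apply:
  "wmul f g (i,j) = (\<Sum>a\<le>i. \<Sum>b\<le>j. wshift (i - a) (j - b) (f (a,b)) * g (i - a, j - b))"
  by (simp add: wmul_def)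

lemma wshift_zero [simp]: "wshift b1 b2 0 = 0"
  by (simp add: wshift_def)

lemma wshift_0_0 [simp]: "wshift 0 0 P = P"
proof -
  have "map_poly (\<lambda>p. p \<circ>\<^sub>p [:0, 1:]) P = map_poly id P" by (simp add: id_def)
  then show ?thesis by (simp add: wshift_def map_poly_id)
qed

lemma wshift_pCons_0: "wshift b1 b2 [:c:] = [:c \<circ>\<^sub>p [:of_nat b1, 1:]:]"
  by (simp add: wshift_def map_poly_pCons)

lemma coeff_0_wshift: "coeff (wshift b1 0 P) 0 = coeff P 0 \<circ>\<^sub>p [:of_nat b1, 1:]"
  by (simp add: wshift_def coeff_map_poly)

lemma wshift_theta2: "wshift b1 b2 [:0, 1:] = [:[:of_nat b2:], 1:]"
  by (simp add: wshift_def map_poly_pCons pcompose_pCons one_pCons)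

lemma sum_atMost_delta2:
  "(\<Sum>a\<le>(i::nat). \<Sum>b\<le>(j::nat). if a = i' \<and> b = j' then (c::'a::comm_monoid_add) else 0)
     = (if i' \<le> i \<and> j' \<le> j then c else 0)"
proof -
  have "(\<Sum>a\<le>i. \<Sum>b\<le>j. if a = i' \<and> b = j' then c else 0)
      = (\<Sum>a\<le>i. if a = i' then (\<Sum>b\<le>j. if b = j' then c else 0) else 0)"
    by (intro sum.cong refl) auto
  then show ?thesis by simp
qed

lemma wmul_wconst_right: "wmul f (wconst R) (i,j) = f (i,j) * R"
proof -
  have "wmul f (wconst R) (i,j) = (\<Sum>a\<le>i. \<Sum>b\<le>j. if a = i \<and> b = j then f (i,j) * R else 0)"
    unfolding wmul_apply by (intro sum.cong refl) (auto simp: wconst_def)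
  then show ?thesis by (simp only: sum_atMost_delta2) simp
qed

lemma wmul_wconst_left: "wmul (wconst P) g (i,j) = wshift i j P * g (i,j)"
proof -
  have "wmul (wconst P) g (i,j) = (\<Sum>a\<le>i. \<Sum>b\<le>j. if a = 0 \<and> b = 0 then wshift i j P * g (i,j) else 0)"
    unfolding wmul_apply by (intro sum.cong refl) (auto simp: wconst_def)
  then show ?thesis by (simp only: sum_atMost_delta2) simp
qed

lemma wmul_wconst_times_theta2:
  assumes "\<And>i j. j \<noteq> 0 \<Longrightarrow> Q (i,j) = 0"
  shows "wmul Q (wconst (P * [:0, 1:])) = wmul wth2 (wmul Q (wconst P))"
proof (rule ext, clarify)
  fix i j
  show "wmul Q (wconst (P * [:0, 1:])) (i,j) = wmul wth2 (wmul Q (wconst P)) (i,j)"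
    using assms[of j i]
    by (cases "j = 0") (simp_all add: wth2_def wmul_wconst_left wmul_wconst_right wshift_theta2 mult_ac)
qed

lemma wmul_wzero [simp]: "wmul wzero g = wzero" "wmul f wzero = wzero"
  by (auto simp: wmul_def wzero_def)

lemma wsmul_wzero [simp]: "wsmul c wzero = wzero"
  by (auto simp: wsmul_def wzero_def)

lemma wadd_wzero [simp]: "wadd f wzero = f" "wadd wzero f = f"
  by (auto simp: wadd_def wzero_def)

lemma wadd_commute: "wadd f g = wadd g f"
  by (auto simp: wadd_def fun_eq_iff add.commute)

lemma wmul_wadd_right: "wmul f (wadd g h) = wadd (wmul f g) (wmul f h)"
  by (auto simp: wmul_def wadd_def fun_eq_iff distrib_left sum.distrib)

lemma wfin_wmul:
  assumes "wfin f" "wfin g" shows "wfin (wmul f g)"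
proof -
  let ?Sf = "{k. f k \<noteq> 0}" and ?Sg = "{k. g k \<noteq> 0}"
  let ?plus = "\<lambda>((a,b),(c,d)). (a + c, b + d)"
  have "{k. wmul f g k \<noteq> 0} \<subseteq> ?plus ` (?Sf \<times> ?Sg)"
  proof
    fix k assume "k \<in> {k. wmul f g k \<noteq> 0}"
    then obtain i j where k: "k = (i,j)" and nz: "wmul f g (i,j) \<noteq> 0" by (cases k) auto
    from nz obtain a where a: "a \<le> i"
        "(\<Sum>b\<le>j. wshift (i - a) (j - b) (f (a,b)) * g (i - a, j - b)) \<noteq> 0"
      unfolding wmul_apply by (metis (no_types, lifting) atMost_iff sum.neutral)
    then obtain b where b: "b \<le> j" "wshift (i - a) (j - b) (f (a,b)) * g (i - a, j - b) \<noteq> 0"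
      by (metis (no_types, lifting) atMost_iff sum.neutral)
    then have "((a,b),(i - a, j - b)) \<in> ?Sf \<times> ?Sg"
      by auto
    moreover have "k = ?plus ((a,b),(i - a, j - b))" using k a b by auto
    ultimately show "k \<in> ?plus ` (?Sf \<times> ?Sg)" by blast
  qed
  moreover have "finite (?Sf \<times> ?Sg)" using assms by (simp add: wfin_def)
  ultimately show ?thesis unfolding wfin_def by (meson finite_imageI finite_subset)
qed

lemma wfin_wadd: "wfin f \<Longrightarrow> wfin g \<Longrightarrow> wfin (wadd f g)"
  unfolding wfin_def wadd_def
  by (rule finite_subset[of _ "{k. f k \<noteq> 0} \<union> {k. g k \<noteq> 0}"]) auto

lemma wfin_wsmul: "wfin f \<Longrightarrow> wfin (wsmul c f)"
  unfolding wfin_def wsmul_def by (rule finite_subset[of _ "{k. f k \<noteq> 0}"]) auto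

lemma wfin_wconst: "wfin (wconst P)"
  unfolding wfin_def wconst_def by (rule finite_subset[of _ "{(0,0)}"]) auto

lemma wfin_wzero: "wfin wzero"
  by (simp add: wfin_def wzero_def)

lemma wfin_generators: "wfin wth1" "wfin wth2" "wfin (wc c)" "wfin wz1"
proof -
  show "wfin wth1" "wfin wth2" "wfin (wc c)"
    unfolding wth1_def wth2_def wc_def by (rule wfin_wconst)+
  show "wfin wz1" unfolding wfin_def wz1_def by (rule finite_subset[of _ "{(1,0)}"]) auto
qed

lemma wfin_opL: "wfin (opL a0 a1 a2)"
  unfolding opL_def by (intro wfin_wadd wfin_wmul wfin_wsmul wfin_generators)

lemma wfin_wreduce: "wfin f \<Longrightarrow> wfin (wreduce f)"
  unfolding wfin_def
  by (rule finite_subset[of _ "{k. f k \<noteq> 0}"]) (auto simp: wreduce_def split: if_splits)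

lemma wreduce_wmul: "wreduce (wmul f g) = wmul (wreduce f) (wreduce g)"
proof (rule ext, clarify)
  fix i j
  show "wreduce (wmul f g) (i,j) = wmul (wreduce f) (wreduce g) (i,j)"
  proof (cases "j = 0")
    case True
    have "wreduce (wmul f g) (i,j)
        = (\<Sum>a\<le>i. [:coeff (wshift (i - a) 0 (f (a,0))) 0 * coeff (g (i - a, 0)) 0:])"
      using True by (simp add: wreduce_apply wmul_apply coeff_sum coeff_mult_0 flip: sum_to_poly)
    also have "\<dots> = wmul (wreduce f) (wreduce g) (i,j)"
      using True by (simp add: wreduce_apply wmul_apply coeff_0_wshift wshift_pCons_0 mult_ac)
    finally show ?thesis .
  next
    case False
    then have "wmul (wreduce f) (wreduce g) (i,j) = 0"
      unfolding wmul_apply by (intro sum.neutral ballI) (auto simp: wreduce_apply)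
    then show ?thesis using False by (simp add: wreduce_apply)
  qed
qed

lemma wreduce_wadd: "wreduce (wadd f g) = wadd (wreduce f) (wreduce g)"
  by (auto simp: wreduce_def wadd_def fun_eq_iff)

lemma wreduce_wsmul: "wreduce (wsmul c f) = wsmul c (wreduce f)"
  by (auto simp: wreduce_def wsmul_def fun_eq_iff coeff_mult_0)

lemma wreduce_generators:
  "wreduce wth1 = wth1" "wreduce wth2 = wzero" "wreduce (wc c) = wc c"
  "wreduce wzero = wzero" "wreduce wz1 = wz1" "wreduce wz2 = wzero"
  by (auto simp: wreduce_def wth1_def wth2_def wc_def wzero_def wz1_def wz2_def wconst_def fun_eq_iff)

lemmas wreduce_simps = wreduce_wadd wreduce_wsmul wreduce_wmul wreduce_generators

lemma wreduce_idem: "wreduce (wreduce f) = wreduce f"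
  by (auto simp: wreduce_def fun_eq_iff)

lemma in_sub1_iff_wreduce: "in_sub1 f \<longleftrightarrow> wfin f \<and> wreduce f = f"
proof
  assume "in_sub1 f"
  then show "wfin f \<and> wreduce f = f"
    by (auto simp: in_sub1_def wreduce_def fun_eq_iff degree_0_id)
next
  assume f: "wfin f \<and> wreduce f = f"
  then have h: "f (i,j) = (if j = 0 then [:coeff (f (i,0)) 0:] else 0)" for i j
    by (metis wreduce_apply)
  have "degree (f (i,0)) = 0" for i by (metis degree_pCons_0 h)
  moreover have "j \<noteq> 0 \<Longrightarrow> f (i,j) = 0" for i j by (metis h)
  ultimately show "in_sub1 f" using f by (auto simp: in_sub1_def)
qed

lemma wreduce_opL1: "wreduce (opL1 n a0 a1 a2) = opL a0 a1 a2"
  unfolding opL1_def opL_def by (simp add: wreduce_simps)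

lemma wreduce_opL: "wreduce (opL a0 a1 a2) = opL a0 a1 a2"
  unfolding opL_def by (simp add: wreduce_simps)

lemma wreduce_opL2: "n \<ge> 1 \<Longrightarrow> wreduce (opL2 n) = wzero"
  unfolding opL2_def by (cases n) (simp_all add: wreduce_simps wpow_def)

lemma left_ideal_gen_two:
  "left_ideal_gen [g1, g2] = {wadd (wmul p1 g1) (wmul p2 g2) | p1 p2. wfin p1 \<and> wfin p2}"
proof (intro set_eqI iffI)
  fix x assume "x \<in> left_ideal_gen [g1, g2]"
  then obtain ps where x: "x = foldr wadd (map2 wmul ps [g1, g2]) wzero"
      and "length ps = length [g1, g2]" and fin: "\<forall>p\<in>set ps. wfin p"
    unfolding left_ideal_gen_def wzero_def by blast
  then obtain p1 p2 where "ps = [p1, p2]"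
    by (auto simp: length_Suc_conv)
  with x fin show "x \<in> {wadd (wmul p1 g1) (wmul p2 g2) | p1 p2. wfin p1 \<and> wfin p2}"
    by auto
next
  fix x assume "x \<in> {wadd (wmul p1 g1) (wmul p2 g2) | p1 p2. wfin p1 \<and> wfin p2}"
  then obtain p1 p2 where "x = foldr wadd (map2 wmul [p1, p2] [g1, g2]) wzero" "wfin p1" "wfin p2"
    by auto
  then show "x \<in> left_ideal_gen [g1, g2]"
    unfolding left_ideal_gen_def wzero_def by (intro CollectI exI[of _ "[p1, p2]"]) simp
qed

lemma left_ideal_mem_two:
  "wfin p1 \<Longrightarrow> wfin p2 \<Longrightarrow> wadd (wmul p1 g1) (wmul p2 g2) \<in> left_ideal_gen [g1, g2]"
  unfolding left_ideal_gen_two by blast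

lemma restrict_z2I:
  "in_sub1 A \<Longrightarrow> wfin B1 \<Longrightarrow> wfin B2 \<Longrightarrow> wadd A (wadd (wmul wz2 B1) (wmul wth2 B2)) \<in> I
    \<Longrightarrow> A \<in> restrict_z2 I"
  unfolding restrict_z2_def by blast

lemma opL1_eq_theta2_term_plus_opL:
  "opL1 n a0 a1 a2 = wadd (wconst ([:[:- of_nat n:]:] * [:[:0, 1:]:] * [:0, 1:])) (opL a0 a1 a2)"
proof -
  have "wmul wth1 wth2 = wconst ([:[:0, 1:]:] * [:0, 1:])"
    unfolding wth2_def by (rule ext, clarify) (subst wmul_wconst_right, simp add: wth1_def wconst_def)
  then have "wsmul (- of_nat n) (wmul wth1 wth2) = wconst ([:[:- of_nat n:]:] * [:[:0, 1:]:] * [:0, 1:])"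
    by (auto simp: fun_eq_iff wsmul_def wconst_def mult.assoc)
  then show ?thesis
    unfolding opL1_def opL_def by (auto simp: wadd_def fun_eq_iff add.assoc)
qed

lemma restrict_z2_left_ideal_gen_subset:
  assumes "wreduce g2 = wzero"
  shows "restrict_z2 (left_ideal_gen [g1, g2]) \<subseteq> sub1_left_ideal (wreduce g1)"
proof
  fix A assume "A \<in> restrict_z2 (left_ideal_gen [g1, g2])"
  then obtain B1 B2 p1 p2 where A: "in_sub1 A" and "wfin p1" and
    eq: "wadd A (wadd (wmul wz2 B1) (wmul wth2 B2)) = wadd (wmul p1 g1) (wmul p2 g2)"
    unfolding restrict_z2_def left_ideal_gen_two by auto
  from arg_cong[OF eq, of wreduce] A assms
  have "A = wmul (wreduce p1) (wreduce g1)"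
    by (simp add: wreduce_simps in_sub1_iff_wreduce)
  moreover have "in_sub1 (wreduce p1)"
    using \<open>wfin p1\<close> by (simp add: in_sub1_iff_wreduce wfin_wreduce wreduce_idem)
  ultimately show "A \<in> sub1_left_ideal (wreduce g1)"
    unfolding sub1_left_ideal_def by blast
qed

text \<open>The witness is B1 = 0, B2 = Q P: theta2 commutes with the z2-free Q.\<close>

lemma sub1_left_ideal_subset_restrict_z2:
  assumes g: "in_sub1 g"
  shows "sub1_left_ideal g \<subseteq> restrict_z2 (left_ideal_gen [wadd (wconst (P * [:0, 1:])) g, g2])"
    (is "_ \<subseteq> restrict_z2 (left_ideal_gen [?g1, g2])")
proof
  fix A assume "A \<in> sub1_left_ideal g"
  then obtain Q where Q: "in_sub1 Q" and A: "A = wmul Q g"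
    unfolding sub1_left_ideal_def by auto
  define B2 where "B2 = wmul Q (wconst P)"
  have "wmul Q ?g1 = wadd (wmul wth2 B2) A"
    using Q unfolding wmul_wadd_right A B2_def in_sub1_def
    by (subst wmul_wconst_times_theta2) auto
  then have "wadd A (wadd (wmul wz2 wzero) (wmul wth2 B2)) = wadd (wmul Q ?g1) (wmul wzero g2)"
    by (simp add: wadd_commute)
  also have "\<dots> \<in> left_ideal_gen [?g1, g2]"
    using Q wfin_wzero by (intro left_ideal_mem_two) (simp_all add: in_sub1_def)
  finally have mem: "wadd A (wadd (wmul wz2 wzero) (wmul wth2 B2)) \<in> left_ideal_gen [?g1, g2]" .
  have "wfin B2" "in_sub1 A"
    using Q g unfolding A B2_def in_sub1_iff_wreduce
    by (simp_all add: wfin_wmul wfin_wconst wreduce_wmul)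
  then show "A \<in> restrict_z2 (left_ideal_gen [?g1, g2])"
    using restrict_z2I[OF _ wfin_wzero _ mem] by blast
qed

theorem proposition1:
  fixes n :: nat and a0 a1 a2 :: complex
  assumes "n \<ge> 1" and "a0 \<noteq> 0"
  shows "restrict_z2 (left_ideal_gen [opL1 n a0 a1 a2, opL2 n]) = sub1_left_ideal (opL a0 a1 a2)"
proof (rule equalityI)
  show "restrict_z2 (left_ideal_gen [opL1 n a0 a1 a2, opL2 n]) \<subseteq> sub1_left_ideal (opL a0 a1 a2)"
    using restrict_z2_left_ideal_gen_subset[of "opL2 n" "opL1 n a0 a1 a2"]
    by (simp add: wreduce_opL1 wreduce_opL2[OF assms(1)])
  show "sub1_left_ideal (opL a0 a1 a2) \<subseteq> restrict_z2 (left_ideal_gen [opL1 n a0 a1 a2, opL2 n])"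
    unfolding opL1_eq_theta2_term_plus_opL
    by (rule sub1_left_ideal_subset_restrict_z2) (simp add: in_sub1_iff_wreduce wfin_opL wreduce_opL)
qed

end
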